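(* If $a\in R$ and $a\le1$, then $a\le 1\cdot D(a)$, i.e. $1=\big((a\le0)\wedge1\big)\vee\big((a\le1)\wedge D(a)\big)$ in $B$.
   Context: $R$ is a Riesz space over $\mathbb{Q}$ with strong unit $1$; rationals $r$ are identified with $r\cdot1$. $\mathrm{Spec}(R)$ is the distributive lattice generated by $D(a)$, $a\in R$, subject to $D(1)=1$; $D(a)\wedge D(-a)=0$; $D(a+b)\le D(a)\vee D(b)$; $D(a)=0$ if $a\le0$; $D(a\vee b)=D(a)\vee D(b)$. $B$ is the Boolean algebra freely generated by $\mathrm{Spec}(R)$; $(f>r):=D(f-r)$ and $(f\le r):=\neg(f>r)$. For $f\in R$ and a positive simple function $\sum_js_jy_j$ (rationals $s_j\ge0$, $y_j\in B$): $f\le\sum_js_jy_j$ iff $1=\bigvee_J((f\le s_J)\wedge y_J)$ over all finite index sets $J$, where $y_J=\bigwedge_{j\in J}y_j$ ($y_\emptyset=1$) and $s_J=\sum_{j\in J}s_j$ ($s_\emptyset=0$). *)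

theory Defs
  imports Main "HOL-Library.Lattice_Algebras"
begin

definition rat_riesz_space_unit :: "(rat \<Rightarrow> 'r::lattice_ab_group_add \<Rightarrow> 'r) \<Rightarrow> 'r \<Rightarrow> bool" where
  "rat_riesz_space_unit sc u \<longleftrightarrow>
     (\<forall>x y q. sc q (x + y) = sc q x + sc q y) \<and>
     (\<forall>x p q. sc (p + q) x = sc p x + sc q x) \<and>
     (\<forall>x p q. sc (p * q) x = sc p (sc q x)) \<and>
     (\<forall>x. sc 1 x = x) \<and>
     (\<forall>x q. 0 \<le> q \<and> 0 \<le> x \<longrightarrow> 0 \<le> sc q x) \<and>
     0 \<le> u \<and>
     (\<forall>x. \<exists>n::nat. x \<le> sc (of_nat n) u \<and> - x \<le> sc (of_nat n) u)"

text \<open>A map D from R into a Boolean algebra satisfying the defining relations of Spec(R).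
  Boolean homomorphisms out of B (the free Boolean algebra on Spec(R)) into a Boolean algebra
  'b correspond exactly to such maps; hence an equation holds in B iff it holds for every
  such D into every Boolean algebra.\<close>

definition spec_rel :: "'r::lattice_ab_group_add \<Rightarrow> ('r \<Rightarrow> 'b::boolean_algebra) \<Rightarrow> bool" where
  "spec_rel u D \<longleftrightarrow>
     D u = top \<and>
     (\<forall>a. inf (D a) (D (- a)) = bot) \<and>
     (\<forall>a b. D (a + b) \<le> sup (D a) (D b)) \<and>
     (\<forall>a. a \<le> 0 \<longrightarrow> D a = bot) \<and>
     (\<forall>a b. D (sup a b) = sup (D a) (D b))"

text \<open>(f > r) := D(f - r*1) and (f \<le> r) := \<not>(f > r).\<close>

definition gtr :: "('r::lattice_ab_group_add \<Rightarrow> 'b::boolean_algebra) \<Rightarrow> (rat \<Rightarrow> 'r \<Rightarrow> 'r) \<Rightarrow> 'r \<Rightarrow> 'r \<Rightarrow> rat \<Rightarrow> 'b" where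
  "gtr D sc u f r = D (f - sc r u)"

definition ler :: "('r::lattice_ab_group_add \<Rightarrow> 'b::boolean_algebra) \<Rightarrow> (rat \<Rightarrow> 'r \<Rightarrow> 'r) \<Rightarrow> 'r \<Rightarrow> 'r \<Rightarrow> rat \<Rightarrow> 'b" where
  "ler D sc u f r = - gtr D sc u f r"

end

theory Submission
  imports Defs
begin

text \<open>Since \<open>a \<le> 1\<close>, the element \<open>(a \<le> 1)\<close> is already \<open>1\<close>, while \<open>(a \<le> 0)\<close> is the complement
  of \<open>D(a)\<close>; the join of an element with its complement is \<open>1\<close>.\<close>

lemma rat_riesz_space_unit_scale_zero:
  assumes "rat_riesz_space_unit sc u"
  shows "sc 0 x = 0"
proof -
  have "sc (0 + 0) x = sc 0 x + sc 0 x"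
    using assms unfolding rat_riesz_space_unit_def by blast
  then show ?thesis by simp
qed

lemma rat_riesz_space_unit_scale_one:
  assumes "rat_riesz_space_unit sc u"
  shows "sc 1 x = x"
  using assms unfolding rat_riesz_space_unit_def by blast

lemma ler_zero:
  assumes "rat_riesz_space_unit sc u"
  shows "ler D sc u f 0 = - D f"
  unfolding ler_def gtr_def rat_riesz_space_unit_scale_zero[OF assms] by simp

lemma ler_eq_top_if_le:
  assumes "spec_rel u D" and "f \<le> sc r u"
  shows "ler D sc u f r = top"
proof -
  have "f - sc r u \<le> 0" using assms(2) by simp
  then have "D (f - sc r u) = bot" using assms(1) unfolding spec_rel_def by blast
  then show ?thesis unfolding ler_def gtr_def by simp
qed

theorem lemma4p6:
  fixes sc :: "rat \<Rightarrow> 'r::lattice_ab_group_add \<Rightarrow> 'r" and u a :: 'r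
    and D :: "'r \<Rightarrow> 'b::boolean_algebra"
  assumes "rat_riesz_space_unit sc u"
    and "spec_rel u D"
    and "a \<le> u"
  shows "top = sup (inf (ler D sc u a 0) top) (inf (ler D sc u a 1) (D a))"
proof -
  have "ler D sc u a 1 = top"
    using ler_eq_top_if_le[OF assms(2)] assms(3)
    by (simp add: rat_riesz_space_unit_scale_one[OF assms(1)])
  then show ?thesis by (simp add: ler_zero[OF assms(1)])
qed

end
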